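(* Let $A$ be a unital C$^*$-algebra with the QTS property. Assume that $A$ has a unique tracial state and that this tracial state is faithful. Then $A$ is simple.
   Context: A unital C$^*$-algebra $A$ has the QTS property if for every proper closed two-sided ideal $J$ of $A$, the quotient $A/J$ admits a tracial state. *)

theory Defs
  imports Complex_Main
begin

class cstar_algebra_1 = real_normed_algebra_1 + banach +
  fixes scaleC :: "complex \<Rightarrow> 'a \<Rightarrow> 'a"
    and cstar :: "'a \<Rightarrow> 'a"
  assumes scaleC_add_right: "scaleC c (x + y) = scaleC c x + scaleC c y"
    and scaleC_add_left: "scaleC (c + d) x = scaleC c x + scaleC d x"
    and scaleC_scaleC: "scaleC c (scaleC d x) = scaleC (c * d) x"
    and scaleC_one: "scaleC 1 x = x"
    and scaleR_scaleC: "scaleR r x = scaleC (complex_of_real r) x"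
    and norm_scaleC: "norm (scaleC c x) = cmod c * norm x"
    and mult_scaleC_left: "scaleC c x * y = scaleC c (x * y)"
    and mult_scaleC_right: "x * scaleC c y = scaleC c (x * y)"
    and cstar_cstar: "cstar (cstar x) = x"
    and cstar_add: "cstar (x + y) = cstar x + cstar y"
    and cstar_scaleC: "cstar (scaleC c x) = scaleC (cnj c) (cstar x)"
    and cstar_mult: "cstar (x * y) = cstar y * cstar x"
    and cstar_identity: "norm (cstar x * x) = norm x * norm x"

definition closed_ideal :: "'a::cstar_algebra_1 set \<Rightarrow> bool" where
  "closed_ideal J \<longleftrightarrow>
     0 \<in> J \<and> (\<forall>x\<in>J. \<forall>y\<in>J. x + y \<in> J) \<and> (\<forall>c. \<forall>x\<in>J. scaleC c x \<in> J) \<and>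
     (\<forall>a. \<forall>x\<in>J. a * x \<in> J \<and> x * a \<in> J) \<and> closed J"

definition proper_closed_ideal :: "'a::cstar_algebra_1 set \<Rightarrow> bool" where
  "proper_closed_ideal J \<longleftrightarrow> closed_ideal J \<and> J \<noteq> UNIV"

definition simple_cstar :: "'a::cstar_algebra_1 itself \<Rightarrow> bool" where
  "simple_cstar _ \<longleftrightarrow> (\<forall>J::'a set. closed_ideal J \<longrightarrow> J = {0} \<or> J = UNIV)"

text \<open>Elements of A/J are cosets q(a) = a + J. Every notion on A/J below is
  the corresponding notion in the quotient C*-algebra written out on
  representatives: q(a) = q(b) iff a - b in J; q(a) is invertible in A/J iff
  there is b with a*b - 1 and b*a - 1 in J; q(a)* = q(a*).
  For J = {0} these are the notions in A itself.\<close>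

definition invertible_mod :: "'a::cstar_algebra_1 set \<Rightarrow> 'a \<Rightarrow> bool" where
  "invertible_mod J a \<longleftrightarrow> (\<exists>b. a * b - 1 \<in> J \<and> b * a - 1 \<in> J)"

definition spectrum_mod :: "'a::cstar_algebra_1 set \<Rightarrow> 'a \<Rightarrow> complex set" where
  "spectrum_mod J a = {l. \<not> invertible_mod J (a - scaleC l 1)}"

definition positive_mod :: "'a::cstar_algebra_1 set \<Rightarrow> 'a \<Rightarrow> bool" where
  "positive_mod J a \<longleftrightarrow> cstar a - a \<in> J \<and>
     (\<forall>l\<in>spectrum_mod J a. l \<in> \<real> \<and> Re l \<ge> 0)"

text \<open>A tracial state on A/J, given as the function tau o q on A (q the
  quotient map): well defined on cosets, complex linear, positive, unital,
  tracial.\<close>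
definition tracial_state_mod :: "'a::cstar_algebra_1 set \<Rightarrow> ('a \<Rightarrow> complex) \<Rightarrow> bool" where
  "tracial_state_mod J \<tau> \<longleftrightarrow>
     (\<forall>x y. x - y \<in> J \<longrightarrow> \<tau> x = \<tau> y) \<and>
     (\<forall>x y. \<tau> (x + y) = \<tau> x + \<tau> y) \<and>
     (\<forall>c x. \<tau> (scaleC c x) = c * \<tau> x) \<and>
     (\<forall>a. positive_mod J a \<longrightarrow> \<tau> a \<in> \<real> \<and> Re (\<tau> a) \<ge> 0) \<and>
     \<tau> 1 = 1 \<and>
     (\<forall>x y. \<tau> (x * y) = \<tau> (y * x))"

definition tracial_state :: "('a::cstar_algebra_1 \<Rightarrow> complex) \<Rightarrow> bool" where
  "tracial_state \<tau> \<longleftrightarrow> tracial_state_mod {0} \<tau>"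

definition positive :: "'a::cstar_algebra_1 \<Rightarrow> bool" where
  "positive a \<longleftrightarrow> positive_mod {0} a"

definition faithful :: "('a::cstar_algebra_1 \<Rightarrow> complex) \<Rightarrow> bool" where
  "faithful \<tau> \<longleftrightarrow> (\<forall>a. positive a \<and> \<tau> a = 0 \<longrightarrow> a = 0)"

definition QTS :: "'a::cstar_algebra_1 itself \<Rightarrow> bool" where
  "QTS _ \<longleftrightarrow> (\<forall>J::'a set. proper_closed_ideal J \<longrightarrow> (\<exists>\<tau>. tracial_state_mod J \<tau>))"

end

theory Submission
  imports Defs
begin

text \<open>If J is a proper nonzero closed ideal, QTS gives a tracial state of A/J; composed with
  the quotient map it is a tracial state of A, hence faithful. But it vanishes on J, and J
  contains the nonzero positive element (x* x)^2 for any nonzero x in J.\<close>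

lemma neumann_series_inverse:
  fixes z :: "'a::{banach,real_normed_algebra_1}"
  assumes "norm z < 1"
  shows "\<exists>b. (1 - z) * b = 1 \<and> b * (1 - z) = 1"
proof -
  have "summable (\<lambda>n. norm z ^ n)" using assms by (intro summable_geometric) simp
  then have summable: "summable (\<lambda>n. z ^ n)"
    by (rule summable_comparison_test[rotated]) (auto intro: norm_power_ineq)
  define s where "s = (\<Sum>n. z ^ n)"
  have sums: "(\<lambda>n. z ^ n) sums s" using summable s_def summable_sums by blast
  have telescope: "(\<lambda>n. z ^ n - z ^ Suc n) sums 1"
    using telescope_sums'[OF summable_LIMSEQ_zero[OF summable]] by simp
  have "(\<lambda>n. (1 - z) * z ^ n) sums ((1 - z) * s)" using sums_mult[OF sums] .
  moreover have "(\<lambda>n. (1 - z) * z ^ n) = (\<lambda>n. z ^ n - z ^ Suc n)"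
    by (auto simp: algebra_simps)
  ultimately have "(1 - z) * s = 1" using telescope sums_unique2 by fastforce
  moreover have "(\<lambda>n. z ^ n * (1 - z)) sums (s * (1 - z))" using sums_mult2[OF sums] .
  moreover have "(\<lambda>n. z ^ n * (1 - z)) = (\<lambda>n. z ^ n - z ^ Suc n)"
    by (auto simp: algebra_simps power_commutes)
  ultimately show ?thesis using telescope sums_unique2 by fastforce
qed

context cstar_algebra_1
begin

lemma scaleC_zero_right [simp]: "scaleC c 0 = 0"
  using scaleC_add_right[of c 0 0] by simp

lemma scaleC_zero_left [simp]: "scaleC 0 x = 0"
  using scaleC_add_left[of 0 0 x] by simp

lemma scaleC_minus_right: "scaleC c (- x) = - scaleC c x"
  using scaleC_add_right[of c x "- x"] by (simp add: eq_neg_iff_add_eq_0 add.commute)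

lemma scaleC_minus_left: "scaleC (- c) x = - scaleC c x"
  using scaleC_add_left[of c "- c" x] by (simp add: eq_neg_iff_add_eq_0 add.commute)

lemma scaleC_diff_right: "scaleC c (x - y) = scaleC c x - scaleC c y"
  using scaleC_add_right[of c x "- y"] by (simp add: scaleC_minus_right)

lemma cstar_one [simp]: "cstar 1 = 1"
  using cstar_mult[of "cstar 1" 1] by (simp add: cstar_cstar)

lemma mult_scaleC_one_right [simp]: "x * scaleC c 1 = scaleC c x"
  by (simp add: mult_scaleC_right)

lemma mult_scaleC_one_left [simp]: "scaleC c 1 * x = scaleC c x"
  by (simp add: mult_scaleC_left)

lemma cstar_mult_self_eq_zero_iff: "cstar x * x = 0 \<longleftrightarrow> x = 0"
proof
  assume "cstar x * x = 0"
  then show "x = 0" using cstar_identity[of x] by simp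
qed simp

end

lemma invertible_mod_zero_iff:
  "invertible_mod {0} a \<longleftrightarrow> (\<exists>b. a * b = 1 \<and> b * a = 1)"
  by (simp add: invertible_mod_def)

lemma invertible_mod_zero_mult:
  fixes a b :: "'a::cstar_algebra_1"
  assumes "invertible_mod {0} a" and "invertible_mod {0} b"
  shows "invertible_mod {0} (a * b)"
proof -
  obtain a' b' where "a * a' = 1" "a' * a = 1" "b * b' = 1" "b' * b = 1"
    using assms unfolding invertible_mod_zero_iff by blast
  then have "(a * b) * (b' * a') = 1" "(b' * a') * (a * b) = 1"
    by (metis mult.assoc mult_1_left)+
  then show ?thesis unfolding invertible_mod_zero_iff by blast
qed

lemma invertible_minus_scaleC_if_norm_less:
  fixes y :: "'a::cstar_algebra_1"
  assumes "norm y < cmod l"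
  shows "invertible_mod {0} (y - scaleC l 1)"
proof -
  have l: "l \<noteq> 0" using assms norm_ge_zero[of y] by auto
  define z where "z = scaleC (1 / l) y"
  have "norm z < 1" using assms l by (simp add: z_def norm_scaleC norm_divide)
  then obtain b where b: "(1 - z) * b = 1" "b * (1 - z) = 1"
    using neumann_series_inverse by blast
  have factor: "y - scaleC l 1 = scaleC (- l) (1 - z)"
    using l by (simp add: z_def scaleC_diff_right scaleC_scaleC scaleC_minus_left scaleC_one)
  have "(y - scaleC l 1) * scaleC (- 1 / l) b = 1" "scaleC (- 1 / l) b * (y - scaleC l 1) = 1"
    using l by (simp_all add: factor mult_scaleC_left mult_scaleC_right scaleC_scaleC b scaleC_one)
  then show ?thesis unfolding invertible_mod_zero_iff by blast
qed

lemma norm_selfadjoint_plus_imaginary: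
  fixes h :: "'a::cstar_algebra_1"
  assumes "cstar h = h"
  shows "(norm (h + scaleC (\<i> * t) 1))\<^sup>2 \<le> (norm h)\<^sup>2 + t\<^sup>2"
proof -
  define y where "y = h + scaleC (\<i> * t) 1"
  have "cstar y * y = h * h + scaleC (- (\<i> * t) * (\<i> * t)) 1"
    by (simp add: y_def assms cstar_add cstar_scaleC algebra_simps scaleC_add_right
        scaleC_add_left[symmetric] scaleC_scaleC)
  also have "\<dots> = h * h + scaleC (of_real (t\<^sup>2)) 1"
    by (simp add: power2_eq_square algebra_simps)
  finally have "(norm y)\<^sup>2 = norm (h * h + scaleC (of_real (t\<^sup>2)) 1)"
    using cstar_identity[of y] by (simp add: power2_eq_square)
  also have "\<dots> \<le> norm (h * h) + norm (scaleC (of_real (t\<^sup>2)) (1::'a))"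
    by (rule norm_triangle_ineq)
  also have "\<dots> \<le> (norm h)\<^sup>2 + t\<^sup>2"
    by (simp add: norm_scaleC norm_mult_ineq power2_eq_square norm_mult)
  finally show ?thesis unfolding y_def .
qed

text \<open>Shifting a spectral value l by i t keeps it in the spectrum of h + i t, so
  |l + i t| \<le> \<parallel>h + i t\<parallel>; squaring, Im l \<noteq> 0 is impossible for t large with the sign of Im l.\<close>

lemma spectrum_selfadjoint_real:
  fixes h :: "'a::cstar_algebra_1"
  assumes "cstar h = h" and "l \<in> spectrum_mod {0} h"
  shows "Im l = 0"
proof (rule ccontr)
  assume Im: "Im l \<noteq> 0"
  have bound: "(Re l)\<^sup>2 + (Im l + t)\<^sup>2 \<le> (norm h)\<^sup>2 + t\<^sup>2" for t :: real
  proof -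
    have "(h + scaleC (\<i> * t) 1) - scaleC (l + \<i> * t) 1 = h - scaleC l 1"
      by (simp add: scaleC_add_left algebra_simps)
    moreover have "\<not> invertible_mod {0} (h - scaleC l 1)"
      using assms(2) by (simp add: spectrum_mod_def)
    ultimately have "cmod (l + \<i> * t) \<le> norm (h + scaleC (\<i> * t) 1)"
      using invertible_minus_scaleC_if_norm_less[of "h + scaleC (\<i> * t) 1" "l + \<i> * t"]
      by (metis not_le)
    then have "(cmod (l + \<i> * t))\<^sup>2 \<le> (norm h)\<^sup>2 + t\<^sup>2"
      using norm_selfadjoint_plus_imaginary[OF assms(1), of t]
      by (meson norm_ge_zero order_trans power_mono)
    then show ?thesis by (simp add: cmod_power2)
  qed
  define t where "t = ((norm h)\<^sup>2 + 1) / (2 * Im l)"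
  have "2 * Im l * t = (norm h)\<^sup>2 + 1" using Im by (simp add: t_def)
  moreover have "(Re l)\<^sup>2 + (Im l)\<^sup>2 + 2 * Im l * t + t\<^sup>2 \<le> (norm h)\<^sup>2 + t\<^sup>2"
    using bound[of t] by (simp add: power2_sum)
  moreover have "(Re l)\<^sup>2 \<ge> 0" "(Im l)\<^sup>2 \<ge> 0" by simp_all
  ultimately show False by linarith
qed

text \<open>For l outside [0,\<infinity>) neither square root \<plusminus>m of l is real, so h - m and h + m are
  invertible, and so is their product h^2 - l.\<close>

lemma positive_square_selfadjoint:
  fixes h :: "'a::cstar_algebra_1"
  assumes sa: "cstar h = h"
  shows "positive (h * h)"
proof -
  have "l \<in> \<real> \<and> 0 \<le> Re l" if l: "l \<in> spectrum_mod {0} (h * h)" for l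
  proof (rule ccontr)
    assume not_nonneg: "\<not> (l \<in> \<real> \<and> 0 \<le> Re l)"
    define m where "m = csqrt l"
    have mm: "m * m = l" unfolding m_def by (metis power2_csqrt power2_eq_square)
    have "Im m \<noteq> 0"
    proof
      assume "Im m = 0"
      then have "m = of_real (Re m)" by (simp add: complex_eq_iff)
      then have "l = of_real ((Re m)\<^sup>2)"
        using mm by (metis of_real_mult power2_eq_square)
      then show False using not_nonneg by simp
    qed
    moreover have "invertible_mod {0} (h - scaleC c 1)" if "Im c \<noteq> 0" for c
      using that spectrum_selfadjoint_real[OF sa, of c] by (auto simp: spectrum_mod_def)
    ultimately have "invertible_mod {0} ((h - scaleC m 1) * (h - scaleC (- m) 1))"
      by (simp add: invertible_mod_zero_mult)
    moreover have "(h - scaleC m 1) * (h - scaleC (- m) 1) = h * h - scaleC l 1"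
      by (simp add: algebra_simps scaleC_minus_left scaleC_scaleC mm[symmetric] scaleC_diff_right)
    ultimately show False using l by (simp add: spectrum_mod_def)
  qed
  then show ?thesis by (simp add: positive_def positive_mod_def sa cstar_mult)
qed

lemma tracial_state_if_tracial_state_mod:
  fixes J :: "'a::cstar_algebra_1 set"
  assumes "closed_ideal J" and "tracial_state_mod J \<tau>"
  shows "tracial_state \<tau>"
proof -
  have "0 \<in> J" using assms(1) by (simp add: closed_ideal_def)
  then have "invertible_mod {0} a \<Longrightarrow> invertible_mod J a" for a
    unfolding invertible_mod_def by (metis diff_self singletonD)
  then have "positive_mod {0} a \<Longrightarrow> positive_mod J a" for a
    using \<open>0 \<in> J\<close> by (auto simp: positive_mod_def spectrum_mod_def)
  then show ?thesis
    using assms(2) unfolding tracial_state_def tracial_state_mod_def by auto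
qed

lemma tracial_state_mod_vanishes:
  assumes "tracial_state_mod J \<tau>" and "a \<in> J"
  shows "\<tau> a = 0"
proof -
  have "\<tau> a = \<tau> 0" using assms by (simp add: tracial_state_mod_def)
  also have "\<tau> 0 = 0"
    using assms(1) unfolding tracial_state_mod_def by (metis add_0 add_cancel_right_right)
  finally show ?thesis .
qed

lemma closed_ideal_contains_positive:
  fixes J :: "'a::cstar_algebra_1 set"
  assumes "closed_ideal J" and "J \<noteq> {0}"
  shows "\<exists>a\<in>J. positive a \<and> a \<noteq> 0"
proof -
  obtain x where x: "x \<in> J" "x \<noteq> 0"
    using assms by (auto simp: closed_ideal_def)
  define h where "h = cstar x * x"
  have sa: "cstar h = h" by (simp add: h_def cstar_mult cstar_cstar)
  have "h \<in> J" "h \<noteq> 0"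
    using assms(1) x by (simp_all add: h_def closed_ideal_def cstar_mult_self_eq_zero_iff)
  then have "h * h \<in> J" "h * h \<noteq> 0"
    using assms(1) sa cstar_mult_self_eq_zero_iff[of h] by (simp_all add: closed_ideal_def)
  then show ?thesis using positive_square_selfadjoint[OF sa] by blast
qed

theorem theorem2p2:
  assumes "QTS TYPE('a::cstar_algebra_1)"
    and "\<exists>!\<tau>::'a \<Rightarrow> complex. tracial_state \<tau>"
    and "\<forall>\<tau>::'a \<Rightarrow> complex. tracial_state \<tau> \<longrightarrow> faithful \<tau>"
  shows "simple_cstar TYPE('a)"
  unfolding simple_cstar_def
proof (intro allI impI)
  fix J :: "'a set"
  assume J: "closed_ideal J"
  show "J = {0} \<or> J = UNIV"
  proof (rule ccontr)
    assume "\<not> (J = {0} \<or> J = UNIV)"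
    then obtain \<tau> where \<tau>: "tracial_state_mod J \<tau>"
      using assms(1) J by (auto simp: QTS_def proper_closed_ideal_def)
    have "faithful \<tau>"
      using assms(3) tracial_state_if_tracial_state_mod[OF J \<tau>] by blast
    moreover obtain a where "a \<in> J" "positive a" "a \<noteq> 0"
      using closed_ideal_contains_positive[OF J] \<open>\<not> (J = {0} \<or> J = UNIV)\<close> by blast
    ultimately show False
      using tracial_state_mod_vanishes[OF \<tau>] by (auto simp: faithful_def)
  qed
qed

end
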